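(* In the biased planner's myopic problem described in the context, for every $b\in[0,1-p)$, $\pi^0_B(b)\in\{p,1-b\}$.
   Context: A binary state $\omega\in\{G,B\}$; for an agent with public belief $b$ and private signal precision $q\in[0.5,1]$ (signal matches $\omega$ with probability $q$), the action is the signal if $1-q\le b\le q$, $G$ if $b>q$, $B$ if $b<1-q$. Let $z(b,q)=b+q-2bq$. The biased planner has baseline precision $p\in[0.5,1)$, cost $\beta:[0,1]\to[0,\infty)$ non-negative, increasing, continuous, concave with $\beta(0)=0$, and $C>0$; its instantaneous reward is $r_B(b,q)=-\beta(|q-p|)-Cz(b,q)$ if $q\ge\max(b,1-b)$, $-\beta(|q-p|)-C$ if $b<1-q$, and $-\beta(|q-p|)$ if $b>q$. The myopic optimal precision $\pi^0_B(b)$ is a maximizer of $q\mapsto r_B(b,q)$ over $[0.5,1]$. *)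

theory Defs
  imports "HOL-Analysis.Analysis"
begin

definition zfun :: "real \<Rightarrow> real \<Rightarrow> real" where
  "zfun b q = b + q - 2 * b * q"

definition rB :: "real \<Rightarrow> (real \<Rightarrow> real) \<Rightarrow> real \<Rightarrow> real \<Rightarrow> real \<Rightarrow> real" where
  "rB p beta C b q =
     (if q \<ge> max b (1 - b) then - beta \<bar>q - p\<bar> - C * zfun b q
      else if b < 1 - q then - beta \<bar>q - p\<bar> - C
      else - beta \<bar>q - p\<bar>)"

definition myopic_opt :: "real \<Rightarrow> (real \<Rightarrow> real) \<Rightarrow> real \<Rightarrow> real \<Rightarrow> real \<Rightarrow> bool" where
  "myopic_opt p beta C b q \<longleftrightarrow>
     q \<in> {1/2..1} \<and> (\<forall>q'\<in>{1/2..1}. rB p beta C b q' \<le> rB p beta C b q)"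

end

theory Submission
  imports Defs
begin

text \<open>For \<open>b < 1 - p \<le> 1/2\<close> the interval of precisions splits at \<open>1 - b\<close>. Below it the
  agent always plays \<open>B\<close>, so the reward is \<open>-\<beta>|q - p| - C\<close>, uniquely maximised at \<open>q = p\<close>.
  From \<open>1 - b\<close> on the agent follows its signal; there both the cost \<open>\<beta>(q - p)\<close> and
  \<open>z(b,q) = b + q(1 - 2b)\<close> increase with \<open>q\<close>, so the reward is uniquely maximised at
  \<open>q = 1 - b\<close>.\<close>

lemma zfun_mono_right:
  assumes "b \<le> 1/2" "q \<le> q'"
  shows "zfun b q \<le> zfun b q'"
proof -
  have "q * (1 - 2 * b) \<le> q' * (1 - 2 * b)"
    using assms by (intro mult_right_mono) auto
  then show ?thesis unfolding zfun_def by (simp add: algebra_simps)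
qed

lemma rB_below_threshold:
  assumes "b \<le> 1/2" "q < 1 - b"
  shows "rB p beta C b q = - beta \<bar>q - p\<bar> - C"
  using assms unfolding rB_def by auto

lemma rB_above_threshold:
  assumes "b \<le> 1/2" "1 - b \<le> q"
  shows "rB p beta C b q = - beta \<bar>q - p\<bar> - C * zfun b q"
  using assms unfolding rB_def by auto

lemma rB_below_threshold_less:
  assumes beta: "strict_mono_on {0..1} beta"
    and "b \<le> 1/2" "p < 1 - b" "q < 1 - b" "q \<noteq> p" "\<bar>q - p\<bar> \<le> 1"
  shows "rB p beta C b q < rB p beta C b p"
proof -
  have "beta 0 < beta \<bar>q - p\<bar>"
    using assms by (intro strict_mono_onD[OF beta]) auto
  then show ?thesis
    using assms by (simp add: rB_below_threshold)
qed

lemma rB_above_threshold_less: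
  assumes beta: "strict_mono_on {0..1} beta" and "C \<ge> 0"
    and "b \<le> 1/2" "0 \<le> p" "p \<le> 1 - b" "1 - b < q" "q \<le> 1"
  shows "rB p beta C b q < rB p beta C b (1 - b)"
proof -
  have "beta (1 - b - p) < beta (q - p)"
    using assms by (intro strict_mono_onD[OF beta]) auto
  moreover have "C * zfun b (1 - b) \<le> C * zfun b q"
    using assms by (intro mult_left_mono zfun_mono_right) auto
  ultimately show ?thesis
    using assms by (simp add: rB_above_threshold)
qed

theorem lemma11:
  fixes p C b q :: real and beta :: "real \<Rightarrow> real"
  assumes hp: "1/2 \<le> p" "p < 1"
    and hbeta_nonneg: "\<forall>x\<in>{0..1}. 0 \<le> beta x"
    and hbeta_mono: "strict_mono_on {0..1} beta"
    and hbeta_cont: "continuous_on {0..1} beta"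
    and hbeta_conc: "concave_on {0..1} beta"
    and hbeta0: "beta 0 = 0"
    and hC: "C > 0"
    and hb: "0 \<le> b" "b < 1 - p"
    and hopt: "myopic_opt p beta C b q"
  shows "q \<in> {p, 1 - b}"
proof (rule ccontr)
  assume q_other: "q \<notin> {p, 1 - b}"
  have q: "1/2 \<le> q" "q \<le> 1"
    and q_max: "\<And>q'. q' \<in> {1/2..1} \<Longrightarrow> rB p beta C b q' \<le> rB p beta C b q"
    using hopt unfolding myopic_opt_def by auto
  have b_half: "b \<le> 1/2" using hb hp by simp
  consider "q < 1 - b" | "1 - b < q" using q_other by fastforce
  then show False
  proof cases
    case 1
    then have "rB p beta C b q < rB p beta C b p"
      using hp hb q q_other b_half by (intro rB_below_threshold_less[OF hbeta_mono]) auto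
    with q_max[of p] hp show False by simp
  next
    case 2
    then have "rB p beta C b q < rB p beta C b (1 - b)"
      using hp hb q hC b_half by (intro rB_above_threshold_less[OF hbeta_mono]) auto
    with q_max[of "1 - b"] hb hp show False by simp
  qed
qed

end
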